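(* A *-homomorphism $h:A\to B$ between C*-algebras reflects commutativity if and only if the induced monotone map $C(h):C(A)\to C(B)$, $D\mapsto h(D)$, has a right adjoint.
   Context: All C*-algebras are unital. $C(A)$ is the poset of commutative C*-subalgebras of $A$ ordered by inclusion. A *-homomorphism $h$ reflects commutativity if for all $x,y\in A$, $[h(x),h(y)]=0$ implies $[x,y]=0$. *)

theory Defs
  imports "HOL-Analysis.Analysis"
begin

class cstar_algebra = real_normed_algebra_1 + banach +
  fixes scaleC :: "complex \<Rightarrow> 'a \<Rightarrow> 'a"
    and cstar :: "'a \<Rightarrow> 'a"
  assumes scaleC_of_real: "scaleC (complex_of_real r) x = scaleR r x"
    and scaleC_add_right: "scaleC a (x + y) = scaleC a x + scaleC a y"
    and scaleC_add_left: "scaleC (a + b) x = scaleC a x + scaleC b x"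
    and scaleC_scaleC: "scaleC a (scaleC b x) = scaleC (a * b) x"
    and scaleC_one: "scaleC 1 x = x"
    and norm_scaleC: "norm (scaleC a x) = cmod a * norm x"
    and scaleC_mult_left: "scaleC a x * y = scaleC a (x * y)"
    and scaleC_mult_right: "x * scaleC a y = scaleC a (x * y)"
    and cstar_add: "cstar (x + y) = cstar x + cstar y"
    and cstar_scaleC: "cstar (scaleC a x) = scaleC (cnj a) (cstar x)"
    and cstar_mult: "cstar (x * y) = cstar y * cstar x"
    and cstar_cstar: "cstar (cstar x) = x"
    and cstar_identity: "norm (cstar x * x) = norm x ^ 2"

definition star_hom :: "('a::cstar_algebra \<Rightarrow> 'b::cstar_algebra) \<Rightarrow> bool" where
  "star_hom h \<longleftrightarrow>
     (\<forall>x y. h (x + y) = h x + h y) \<and>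
     (\<forall>c x. h (scaleC c x) = scaleC c (h x)) \<and>
     (\<forall>x y. h (x * y) = h x * h y) \<and>
     (\<forall>x. h (cstar x) = cstar (h x)) \<and>
     h 1 = 1"

definition cstar_subalgebra :: "'a::cstar_algebra set \<Rightarrow> bool" where
  "cstar_subalgebra D \<longleftrightarrow>
     1 \<in> D \<and>
     (\<forall>x\<in>D. \<forall>y\<in>D. x + y \<in> D) \<and>
     (\<forall>c. \<forall>x\<in>D. scaleC c x \<in> D) \<and>
     (\<forall>x\<in>D. \<forall>y\<in>D. x * y \<in> D) \<and>
     (\<forall>x\<in>D. cstar x \<in> D) \<and>
     closed D"

definition comm_subalgebras :: "'a::cstar_algebra set set" where
  "comm_subalgebras = {D. cstar_subalgebra D \<and> (\<forall>x\<in>D. \<forall>y\<in>D. x * y = y * x)}"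

definition reflects_commutativity :: "('a::cstar_algebra \<Rightarrow> 'b::cstar_algebra) \<Rightarrow> bool" where
  "reflects_commutativity h \<longleftrightarrow>
     (\<forall>x y. h x * h y = h y * h x \<longrightarrow> x * y = y * x)"

definition C_map :: "('a::cstar_algebra \<Rightarrow> 'b::cstar_algebra) \<Rightarrow> 'a set \<Rightarrow> 'b set" where
  "C_map h D = h ` D"

definition has_right_adjoint :: "'a set set \<Rightarrow> 'b set set \<Rightarrow> ('a set \<Rightarrow> 'b set) \<Rightarrow> bool" where
  "has_right_adjoint P Q f \<longleftrightarrow>
     (\<exists>g. (\<forall>y\<in>Q. g y \<in> P) \<and> (\<forall>x\<in>P. \<forall>y\<in>Q. f x \<subseteq> y \<longleftrightarrow> x \<subseteq> g y))"

end

theory Submission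
  imports Defs "HOL-Computational_Algebra.Formal_Power_Series"
begin

text \<open>If \<open>h\<close> reflects commutativity, then \<open>E \<mapsto> h\<^sup>-\<^sup>1(E)\<close> is the right adjoint of \<open>C(h)\<close>;
preimages are closed because a *-homomorphism is automatically bounded (a self-adjoint contraction
is the real part of a unitary, and unitaries are mapped to elements of norm 1).
Conversely, let \<open>g\<close> be a right adjoint, let \<open>x\<close> be self-adjoint with \<open>h x = 0\<close> and let \<open>y\<close> be
self-adjoint. Bicommutants of commuting self-adjoint sets are commutative C*-subalgebras. With
\<open>D = {y}''\<close> and \<open>E = h(D)''\<close>, both \<open>D\<close> and \<open>{x}'' \<inter> h\<^sup>-\<^sup>1(E)\<close> are mapped into \<open>E\<close>, so both
lie in the commutative algebra \<open>g(E)\<close> and \<open>x y = y x\<close>. Splitting into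
real and imaginary parts, the kernel of \<open>h\<close> is central. Finally, if \<open>h a\<close> and \<open>h b\<close> commute then
\<open>c = a b - b a\<close> lies in the kernel, and centrality of \<open>c\<^sup>*\<close> and \<open>c\<^sup>* a\<close> gives \<open>c\<^sup>* c = 0\<close>.\<close>

lemma scaleC_zero_left [simp]: "scaleC 0 (x::'a::cstar_algebra) = 0"
  using scaleC_of_real[of 0 x] by simp

lemma scaleC_zero_right [simp]: "scaleC c (0::'a::cstar_algebra) = 0"
  using scaleC_add_right[of c "0::'a" 0] by simp

lemma scaleC_ii_add_minus_ii: "scaleC \<i> (x::'a::cstar_algebra) + scaleC (-\<i>) x = 0"
  using scaleC_add_left[of "\<i>" "-\<i>" x] by simp

lemma cstar_zero [simp]: "cstar (0::'a::cstar_algebra) = 0"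
  using cstar_add[of "0::'a" 0] by simp

lemma cstar_one [simp]: "cstar (1::'a::cstar_algebra) = 1"
  using cstar_mult[of "cstar (1::'a)" 1] by (simp add: cstar_cstar)

lemma cstar_minus: "cstar (- (x::'a::cstar_algebra)) = - cstar x"
  using cstar_add[of x "-x"] by (simp add: add_eq_0_iff)

lemma cstar_diff: "cstar ((x::'a::cstar_algebra) - y) = cstar x - cstar y"
  using cstar_add[of x "-y"] cstar_minus[of y] by simp

lemma cstar_scaleR: "cstar (scaleR r (x::'a::cstar_algebra)) = scaleR r (cstar x)"
  using cstar_scaleC[of "complex_of_real r" x] by (simp add: scaleC_of_real[symmetric])

lemma cstar_power: "cstar ((x::'a::cstar_algebra) ^ n) = cstar x ^ n"
  by (induction n) (simp_all add: cstar_mult power_commutes)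

lemma norm_le_norm_cstar: "norm (x::'a::cstar_algebra) \<le> norm (cstar x)"
proof (cases "x = 0")
  case False
  have "norm x * norm x = norm (cstar x * x)" by (simp add: cstar_identity power2_eq_square)
  also have "\<dots> \<le> norm (cstar x) * norm x" by (rule norm_mult_ineq)
  finally show ?thesis using False by simp
qed simp

lemma norm_cstar [simp]: "norm (cstar (x::'a::cstar_algebra)) = norm x"
  using norm_le_norm_cstar[of x] norm_le_norm_cstar[of "cstar x"] by (simp add: cstar_cstar)

lemma bounded_linear_cstar: "bounded_linear (cstar :: 'a::cstar_algebra \<Rightarrow> 'a)"
  by (rule bounded_linear_intro[where K=1]) (auto simp: cstar_add cstar_scaleR)

lemma eq_zero_if_cstar_mult_self_eq_zero: "cstar x * x = 0 \<Longrightarrow> (x::'a::cstar_algebra) = 0"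
  using cstar_identity[of x] by simp

lemma commute_if_commute_hermitian_parts:
  fixes q z :: "'a::cstar_algebra"
  assumes "q * (z + cstar z) = (z + cstar z) * q"
    and "q * scaleC (-\<i>) (cstar z - z) = scaleC (-\<i>) (cstar z - z) * q"
  shows "q * z = z * q"
proof -
  have z2: "z + z = (z + cstar z) - scaleC \<i> (scaleC (-\<i>) (cstar z - z))"
    by (simp add: scaleC_scaleC scaleC_one)
  have "q * (s - scaleC \<i> w) = (s - scaleC \<i> w) * q" if "q * s = s * q" "q * w = w * q" for s w
    by (simp add: right_diff_distrib left_diff_distrib scaleC_mult_left scaleC_mult_right that)
  from this[OF assms] have "q * (z + z) = (z + z) * q" by (simp only: z2)
  then have "2 *\<^sub>R (q * z) = 2 *\<^sub>R (z * q)" by (simp add: scaleR_2 distrib_left distrib_right)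
  then show ?thesis by simp
qed

lemma cstar_hermitian_parts:
  fixes z :: "'a::cstar_algebra"
  shows "cstar (z + cstar z) = z + cstar z"
    and "cstar (scaleC (-\<i>) (cstar z - z)) = scaleC (-\<i>) (cstar z - z)"
proof -
  show "cstar (z + cstar z) = z + cstar z" by (simp add: cstar_add cstar_cstar)
  have "cstar (scaleC (-\<i>) (cstar z - z)) = scaleC \<i> (z - cstar z)"
    by (simp add: cstar_scaleC cstar_diff cstar_cstar)
  also have "\<dots> = scaleC (-\<i>) (cstar z - z)"
    using scaleC_scaleC[of "\<i>" "-1" "cstar z - z"] scaleC_of_real[of "-1" "cstar z - z"] by simp
  finally show "cstar (scaleC (-\<i>) (cstar z - z)) = scaleC (-\<i>) (cstar z - z)" .
qed

definition sqrt_coeff :: "nat \<Rightarrow> real" where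
  "sqrt_coeff n = ((1/2) gchoose n) * (-1) ^ n"

lemma abs_sqrt_coeff_le_one: "\<bar>sqrt_coeff n\<bar> \<le> 1"
proof -
  have "\<bar>(1/2::real) gchoose n\<bar> \<le> 1"
  proof (induction n)
    case (Suc n)
    have e: "(1/2::real) gchoose Suc n = ((1/2 - real n) / real (Suc n)) * ((1/2) gchoose n)"
      using gbinomial_mult_1[of "1/2::real" n] by (simp add: field_simps)
    have "\<bar>(1/2 - real n) / real (Suc n)\<bar> \<le> 1"
      by (simp add: abs_le_iff divide_le_eq_1)
    then show ?case unfolding e abs_mult using Suc abs_ge_zero by (metis mult_le_one)
  qed simp
  then show ?thesis by (simp add: sqrt_coeff_def abs_mult)
qed

text \<open>\<open>sqrt_coeff n\<close> is the \<open>n\<close>-th Taylor coefficient of \<open>(1 - t)\<^sup>1\<^sup>/\<^sup>2\<close>; squaring that series is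
Vandermonde's identity.\<close>

lemma sqrt_coeff_convolution:
  "(\<Sum>i\<le>k. sqrt_coeff i * sqrt_coeff (k - i)) = (if k = 0 then 1 else if k = 1 then -1 else 0)"
proof -
  have "(\<Sum>i\<le>k. sqrt_coeff i * sqrt_coeff (k - i))
      = (\<Sum>i\<le>k. (-1) ^ k * (((1/2::real) gchoose i) * ((1/2) gchoose (k - i))))"
    by (rule sum.cong) (auto simp: sqrt_coeff_def power_add[symmetric])
  also have "\<dots> = (-1) ^ k * (\<Sum>i=0..k. ((1/2::real) gchoose i) * ((1/2) gchoose (k - i)))"
    by (simp add: sum_distrib_left atMost_atLeast0)
  also have "\<dots> = (-1) ^ k * ((1::real) gchoose k)"
    using gbinomial_Vandermonde[of "1/2::real" "1/2" k] by simp
  also have "(1::real) gchoose k = of_nat (1 choose k)"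
    using binomial_gbinomial[of 1 k, where 'a=real] by simp
  finally show ?thesis by (cases k) (auto simp: binomial_eq_0)
qed

definition sqrt_one_minus :: "'a::cstar_algebra \<Rightarrow> 'a" where
  "sqrt_one_minus y = (\<Sum>k. sqrt_coeff k *\<^sub>R y ^ k)"

lemma summable_norm_sqrt_one_minus:
  fixes y :: "'a::cstar_algebra"
  assumes "norm y < 1"
  shows "summable (\<lambda>k. norm (sqrt_coeff k *\<^sub>R y ^ k))"
proof (rule summable_comparison_test'[where g="\<lambda>k. norm y ^ k"])
  show "summable (\<lambda>k. norm y ^ k)" using assms by (simp add: summable_geometric)
  show "norm (norm (sqrt_coeff k *\<^sub>R y ^ k)) \<le> norm y ^ k" for k
    using mult_mono[OF abs_sqrt_coeff_le_one norm_power_ineq[of y k]] by simp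
qed

lemma sqrt_one_minus_square:
  fixes y :: "'a::cstar_algebra"
  assumes "norm y < 1"
  shows "sqrt_one_minus y * sqrt_one_minus y = 1 - y"
proof -
  let ?a = "\<lambda>k. sqrt_coeff k *\<^sub>R y ^ k"
  have "(\<lambda>k. \<Sum>i\<le>k. ?a i * ?a (k - i)) sums (sqrt_one_minus y * sqrt_one_minus y)"
    unfolding sqrt_one_minus_def
    using Cauchy_product_sums[OF summable_norm_sqrt_one_minus[OF assms]
        summable_norm_sqrt_one_minus[OF assms]] .
  moreover have "(\<Sum>i\<le>k. ?a i * ?a (k - i))
      = (if k = 0 then 1 else 0) + (if k = 1 then - y else 0)" for k
  proof -
    have "(\<Sum>i\<le>k. ?a i * ?a (k - i)) = (\<Sum>i\<le>k. (sqrt_coeff i * sqrt_coeff (k - i)) *\<^sub>R y ^ k)"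
      by (rule sum.cong) (auto simp: power_add[symmetric])
    also have "\<dots> = (\<Sum>i\<le>k. sqrt_coeff i * sqrt_coeff (k - i)) *\<^sub>R y ^ k"
      by (simp add: scaleR_sum_left)
    finally show ?thesis by (simp add: sqrt_coeff_convolution)
  qed
  moreover have "(\<lambda>k. (if k = 0 then 1 else 0) + (if k = 1 then - y else 0)) sums (1 + - y)"
    by (intro sums_add sums_single)
  ultimately show ?thesis using sums_unique2 by fastforce
qed

lemma cstar_real_power_series:
  fixes y :: "'a::cstar_algebra"
  assumes "cstar y = y" and "summable (\<lambda>k. r k *\<^sub>R y ^ k)"
  shows "cstar (\<Sum>k. r k *\<^sub>R y ^ k) = (\<Sum>k. r k *\<^sub>R y ^ k)"
  using bounded_linear.suminf[OF bounded_linear_cstar assms(2)]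
  by (simp add: cstar_scaleR cstar_power assms(1))

lemma commute_real_power_series:
  fixes y z :: "'a::cstar_algebra"
  assumes "z * y = y * z" and "summable (\<lambda>k. r k *\<^sub>R y ^ k)"
  shows "z * (\<Sum>k. r k *\<^sub>R y ^ k) = (\<Sum>k. r k *\<^sub>R y ^ k) * z"
proof -
  have "z * y ^ k = y ^ k * z" for k
    by (induction k) (simp_all add: assms(1) mult.assoc[symmetric] power_commutes,
        simp add: mult.assoc)
  then show ?thesis
    using bounded_linear.suminf[OF bounded_linear_mult_right assms(2), of z]
      bounded_linear.suminf[OF bounded_linear_mult_left assms(2), of z]
    by simp
qed

lemma selfadjoint_contraction_real_part_of_unitary:
  fixes x :: "'a::cstar_algebra"
  assumes sa: "cstar x = x" and nx: "norm x < 1"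
  obtains u where "cstar u * u = 1" and "u + cstar u = x + x"
proof -
  have small: "norm (x * x) < 1"
    using norm_mult_ineq[of x x] nx mult_left_le_one_le[of "norm x" "norm x"] by simp
  have summable: "summable (\<lambda>k. sqrt_coeff k *\<^sub>R (x * x) ^ k)"
    using summable_norm_cancel[OF summable_norm_sqrt_one_minus[OF small]] .
  define c where "c = sqrt_one_minus (x * x)"
  have cc: "c * c = 1 - x * x"
    using sqrt_one_minus_square[OF small] by (simp add: c_def)
  have cs: "cstar c = c"
    unfolding c_def sqrt_one_minus_def
    by (rule cstar_real_power_series[OF _ summable]) (simp add: cstar_mult sa)
  have cx: "x * c = c * x"
    unfolding c_def sqrt_one_minus_def
    by (rule commute_real_power_series[OF _ summable]) (simp add: mult.assoc)
  define u where "u = x + scaleC \<i> c"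
  have cu: "cstar u = x + scaleC (-\<i>) c"
    by (simp add: u_def cstar_add cstar_scaleC sa cs)
  have "cstar u * u
      = x * x + (scaleC \<i> (x * c) + scaleC (-\<i>) (c * x)) + scaleC (-\<i> * \<i>) (c * c)"
    unfolding cu by (simp add: u_def distrib_left distrib_right scaleC_mult_left
        scaleC_mult_right scaleC_scaleC add.assoc scaleC_add_right)
  also have "\<dots> = 1"
    using scaleC_ii_add_minus_ii[of "c * x"] by (simp add: cx cc scaleC_one)
  finally have "cstar u * u = 1" .
  moreover have "u + cstar u = x + x"
    using scaleC_ii_add_minus_ii[of c] unfolding cu by (simp add: u_def algebra_simps)
  ultimately show ?thesis by (rule that)
qed

definition commutant :: "'a::cstar_algebra set \<Rightarrow> 'a set" where
  "commutant S = {z. \<forall>s\<in>S. z * s = s * z}"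

lemma cstar_subalgebra_commutant:
  fixes S :: "'a::cstar_algebra set"
  assumes "\<forall>s\<in>S. cstar s \<in> S"
  shows "cstar_subalgebra (commutant S)"
  unfolding cstar_subalgebra_def
proof (intro conjI ballI allI)
  show "1 \<in> commutant S" by (simp add: commutant_def)
  show "x + y \<in> commutant S" if "x \<in> commutant S" "y \<in> commutant S" for x y
    using that by (simp add: commutant_def distrib_left distrib_right)
  show "scaleC c x \<in> commutant S" if "x \<in> commutant S" for c x
    using that by (simp add: commutant_def scaleC_mult_left scaleC_mult_right)
  show "x * y \<in> commutant S" if "x \<in> commutant S" "y \<in> commutant S" for x y
    using that by (simp add: commutant_def) (metis mult.assoc)
  show "cstar x \<in> commutant S" if "x \<in> commutant S" for x
  proof -
    have "cstar x * s = s * cstar x" if "s \<in> S" for s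
    proof -
      have "x * cstar s = cstar s * x"
        using \<open>x \<in> commutant S\<close> assms that by (simp add: commutant_def)
      then have "cstar (x * cstar s) = cstar (cstar s * x)" by simp
      then show ?thesis by (simp add: cstar_mult cstar_cstar)
    qed
    then show ?thesis by (simp add: commutant_def)
  qed
  have "commutant S = (\<Inter>s\<in>S. {z. z * s = s * z})" by (auto simp: commutant_def)
  moreover have "closed {z. z * s = s * z}" for s :: 'a
    by (intro closed_Collect_eq continuous_intros)
  ultimately show "closed (commutant S)" by (simp add: closed_INT)
qed

lemma bicommutant_in_comm_subalgebras:
  fixes S :: "'a::cstar_algebra set"
  assumes "\<forall>s\<in>S. cstar s \<in> S" and "\<forall>x\<in>S. \<forall>y\<in>S. x * y = y * x"
  shows "commutant (commutant S) \<in> comm_subalgebras"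
proof -
  have "S \<subseteq> commutant S" using assms(2) by (auto simp: commutant_def)
  then have "commutant (commutant S) \<subseteq> commutant S" by (auto simp: commutant_def)
  then have "\<forall>x\<in>commutant (commutant S). \<forall>y\<in>commutant (commutant S). x * y = y * x"
    unfolding commutant_def by blast
  moreover have "\<forall>s\<in>commutant S. cstar s \<in> commutant S"
    using cstar_subalgebra_commutant[OF assms(1)] by (simp add: cstar_subalgebra_def)
  ultimately show ?thesis
    using cstar_subalgebra_commutant by (simp add: comm_subalgebras_def)
qed

lemma subset_bicommutant: "S \<subseteq> commutant (commutant S)"
  by (auto simp: commutant_def)

lemma cstar_subalgebra_Int:
  "cstar_subalgebra D \<Longrightarrow> cstar_subalgebra D' \<Longrightarrow> cstar_subalgebra (D \<inter> D')"
  by (simp add: cstar_subalgebra_def closed_Int)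

lemma zero_in_cstar_subalgebra: "cstar_subalgebra D \<Longrightarrow> 0 \<in> D"
  using scaleC_zero_left[of 1] by (metis cstar_subalgebra_def)

lemma comm_subalgebras_commute:
  "D \<in> comm_subalgebras \<Longrightarrow> x \<in> D \<Longrightarrow> y \<in> D \<Longrightarrow> x * y = y * x"
  by (simp add: comm_subalgebras_def)

context
  fixes h :: "'a::cstar_algebra \<Rightarrow> 'b::cstar_algebra"
  assumes star_hom: "star_hom h"
begin

lemma star_hom_add: "h (x + y) = h x + h y"
  using star_hom by (simp add: star_hom_def)

lemma star_hom_scaleC: "h (scaleC c x) = scaleC c (h x)"
  using star_hom by (simp add: star_hom_def)

lemma star_hom_mult: "h (x * y) = h x * h y"
  using star_hom by (simp add: star_hom_def)

lemma star_hom_cstar: "h (cstar x) = cstar (h x)"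
  using star_hom by (simp add: star_hom_def)

lemma star_hom_one: "h 1 = 1"
  using star_hom by (simp add: star_hom_def)

lemma star_hom_zero: "h 0 = 0"
  using star_hom_add[of 0 0] by simp

lemma star_hom_diff: "h (x - y) = h x - h y"
  using star_hom_add[of "x - y" y] by simp

lemma star_hom_scaleR: "h (scaleR r x) = scaleR r (h x)"
  using star_hom_scaleC[of "complex_of_real r" x] by (simp add: scaleC_of_real)

lemma norm_star_hom_selfadjoint_contraction:
  assumes "cstar x = x" and "norm x < 1"
  shows "norm (h x) \<le> 1"
proof -
  obtain u where u: "cstar u * u = 1" "u + cstar u = x + x"
    using selfadjoint_contraction_real_part_of_unitary[OF assms] .
  have "norm (h u) ^ 2 = 1"
    using cstar_identity[of "h u"] u(1) by (simp add: star_hom_cstar[symmetric]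
        star_hom_mult[symmetric] star_hom_one)
  then have "norm (h u) = 1"
    using norm_ge_zero[of "h u"] power2_eq_1_iff[of "norm (h u)"] by linarith
  have "2 *\<^sub>R h x = h u + cstar (h u)"
    using arg_cong[OF u(2), of h] by (simp add: star_hom_add star_hom_cstar scaleR_2)
  then have "norm (2 *\<^sub>R h x) \<le> norm (h u) + norm (cstar (h u))"
    by (simp only: norm_triangle_ineq)
  then show ?thesis using \<open>norm (h u) = 1\<close> by simp
qed

lemma norm_star_hom_le: "norm (h a) \<le> 2 * norm a"
proof (cases "a = 0")
  case True
  then show ?thesis by (simp add: star_hom_zero)
next
  case False
  define t where "t = 2 * norm a"
  have t: "t > 0" using False by (simp add: t_def)
  define a' where "a' = (1 / t) *\<^sub>R a"
  have na': "norm a' = 1/2" using False by (simp add: a'_def t_def)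
  have "norm (cstar a' * a') = 1/4" by (simp add: cstar_identity na' power2_eq_square)
  moreover have "cstar (cstar a' * a') = cstar a' * a'" by (simp add: cstar_mult cstar_cstar)
  ultimately have "norm (h a') ^ 2 \<le> 1"
    using norm_star_hom_selfadjoint_contraction[of "cstar a' * a'"] cstar_identity[of "h a'"]
    by (simp add: star_hom_mult star_hom_cstar)
  then have "norm (h a') \<le> 1" by (simp add: power_le_one_iff abs_le_square_iff)
  moreover have "h a' = (1 / t) *\<^sub>R h a" by (simp add: a'_def star_hom_scaleR)
  ultimately show ?thesis using t by (simp add: t_def field_simps)
qed

lemma bounded_linear_star_hom: "bounded_linear h"
  by (rule bounded_linear_intro[where K=2])
    (auto simp: star_hom_add star_hom_scaleR, metis norm_star_hom_le mult.commute)

lemma cstar_subalgebra_vimage_star_hom: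
  assumes "cstar_subalgebra E"
  shows "cstar_subalgebra (h -` E)"
proof -
  have "closed (h -` E \<inter> UNIV)"
    using continuous_on_closed_vimage[of UNIV h] assms
      linear_continuous_on[OF bounded_linear_star_hom]
    by (simp add: cstar_subalgebra_def)
  then show ?thesis
    using assms by (simp add: cstar_subalgebra_def star_hom_add star_hom_scaleC star_hom_mult
        star_hom_cstar star_hom_one)
qed

lemma reflects_commutativity_if_kernel_central:
  assumes central: "\<And>k y. h k = 0 \<Longrightarrow> k * y = y * k"
  shows "reflects_commutativity h"
  unfolding reflects_commutativity_def
proof (intro allI impI)
  fix a b
  assume "h a * h b = h b * h a"
  define c where "c = a * b - b * a"
  have hcs: "h (cstar c) = 0"
    using \<open>h a * h b = h b * h a\<close> by (simp add: c_def star_hom_cstar star_hom_diff star_hom_mult)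
  have "h (cstar c * a) = 0" using hcs by (simp add: star_hom_mult)
  then have "cstar c * a * b = b * (cstar c * a)" by (rule central)
  also have "\<dots> = (b * cstar c) * a" by (simp add: mult.assoc)
  also have "\<dots> = cstar c * b * a" by (simp only: central[OF hcs, of b])
  finally have "cstar c * c = 0" by (simp add: c_def right_diff_distrib mult.assoc)
  then have "c = 0" by (rule eq_zero_if_cstar_mult_self_eq_zero)
  then show "a * b = b * a" by (simp add: c_def)
qed

lemma kernel_central_if_selfadjoint_kernel_commute:
  assumes sa: "\<And>x y. cstar x = x \<Longrightarrow> cstar y = y \<Longrightarrow> h x = 0 \<Longrightarrow> x * y = y * x"
    and "h k = 0"
  shows "k * y = y * k"
proof -
  have selfadj_central: "x * y = y * x" if "cstar x = x" "h x = 0" for x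
    by (rule commute_if_commute_hermitian_parts[OF
          sa[OF that(1) cstar_hermitian_parts(1) that(2)]
          sa[OF that(1) cstar_hermitian_parts(2) that(2)]])
  have hk: "h (k + cstar k) = 0" "h (scaleC (-\<i>) (cstar k - k)) = 0"
    using \<open>h k = 0\<close> by (simp_all add: star_hom_add star_hom_cstar star_hom_diff star_hom_scaleC)
  have "y * k = k * y"
    by (rule commute_if_commute_hermitian_parts[OF
          selfadj_central[OF cstar_hermitian_parts(1) hk(1), symmetric]
          selfadj_central[OF cstar_hermitian_parts(2) hk(2), symmetric]])
  then show ?thesis by (rule sym)
qed

lemma selfadjoint_kernel_commute_if_right_adjoint:
  assumes "has_right_adjoint comm_subalgebras comm_subalgebras (C_map h)"
    and "cstar x = x" "cstar y = y" "h x = 0"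
  shows "x * y = y * x"
proof -
  obtain g where gE: "\<And>E. E \<in> comm_subalgebras \<Longrightarrow> g E \<in> comm_subalgebras"
    and adj: "\<And>D E. D \<in> comm_subalgebras \<Longrightarrow> E \<in> comm_subalgebras \<Longrightarrow>
      C_map h D \<subseteq> E \<longleftrightarrow> D \<subseteq> g E"
    using assms(1) unfolding has_right_adjoint_def by blast
  define Dy where "Dy = commutant (commutant {y})"
  have Dy: "Dy \<in> comm_subalgebras"
    unfolding Dy_def using assms(3) by (intro bicommutant_in_comm_subalgebras) auto
  define E where "E = commutant (commutant (h ` Dy))"
  have E: "E \<in> comm_subalgebras"
    unfolding E_def using Dy
    by (intro bicommutant_in_comm_subalgebras)
      (auto simp: comm_subalgebras_def cstar_subalgebra_def
        simp flip: star_hom_cstar star_hom_mult)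
  define Dx where "Dx = h -` E \<inter> commutant (commutant {x})"
  have "commutant (commutant {x}) \<in> comm_subalgebras"
    using assms(2) by (intro bicommutant_in_comm_subalgebras) auto
  then have Dx: "Dx \<in> comm_subalgebras"
    using cstar_subalgebra_Int[OF cstar_subalgebra_vimage_star_hom] E
    by (auto simp: Dx_def comm_subalgebras_def)
  have "x \<in> Dx"
    using E assms(4) subset_bicommutant[of "{x}"] zero_in_cstar_subalgebra
    by (auto simp: Dx_def comm_subalgebras_def)
  moreover have "Dx \<subseteq> g E" using adj[OF Dx E] by (auto simp: C_map_def Dx_def)
  moreover have "Dy \<subseteq> g E" using adj[OF Dy E] subset_bicommutant[of "h ` Dy"]
    by (simp add: C_map_def E_def)
  moreover have "y \<in> Dy" using subset_bicommutant[of "{y}"] by (simp add: Dy_def)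
  ultimately show ?thesis using comm_subalgebras_commute[OF gE[OF E]] by blast
qed

lemma right_adjoint_if_reflects_commutativity:
  assumes "reflects_commutativity h"
  shows "has_right_adjoint comm_subalgebras comm_subalgebras (C_map h)"
  unfolding has_right_adjoint_def
proof (intro exI[of _ "\<lambda>E. h -` E"] conjI ballI)
  show "h -` E \<in> comm_subalgebras" if "E \<in> comm_subalgebras" for E
    using that cstar_subalgebra_vimage_star_hom assms
    by (auto simp: comm_subalgebras_def reflects_commutativity_def)
  show "C_map h D \<subseteq> E \<longleftrightarrow> D \<subseteq> h -` E" for D E
    by (auto simp: C_map_def)
qed

end

theorem mainTheorem7:
  fixes h :: "'a::cstar_algebra \<Rightarrow> 'b::cstar_algebra"
  assumes "star_hom h"
  shows "reflects_commutativity h \<longleftrightarrow>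
         has_right_adjoint comm_subalgebras comm_subalgebras (C_map h)"
proof
  show "has_right_adjoint comm_subalgebras comm_subalgebras (C_map h)"
    if "reflects_commutativity h"
    using right_adjoint_if_reflects_commutativity[OF assms that] .
  show "reflects_commutativity h"
    if "has_right_adjoint comm_subalgebras comm_subalgebras (C_map h)"
    using reflects_commutativity_if_kernel_central[OF assms]
      kernel_central_if_selfadjoint_kernel_commute[OF assms]
      selfadjoint_kernel_commute_if_right_adjoint[OF assms that]
    by blast
qed

end
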